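(* Let $N\ge 2$ and let $\mathcal{A}$ be an $M\times N$ circular Florentine rectangle over $\mathbb{Z}_N$ with rows $\pi_0,\dots,\pi_{M-1}$ (each a permutation of $\mathbb{Z}_N$). Then for all $0\le i\neq r\le M-1$ and every $l'\in\mathbb{Z}_N$, the equation $\pi_i(t)=\pi_r(t+l')$ (with $t+l'$ taken modulo $N$) has exactly one solution $t\in\mathbb{Z}_N$.
   Context: An $M\times N$ circular Florentine rectangle (CFR) over $\mathbb{Z}_N$ is an $M\times N$ array whose rows, viewed as maps $\pi_i:\mathbb{Z}_N\to\mathbb{Z}_N$ ($\pi_i(x)$ is the entry in row $i$, column $x$), are permutations of $\mathbb{Z}_N$, and such that for every $m\in\mathbb{Z}_N\setminus\{0\}$ and all $0\le i,j\le M-1$, $x,y\in\mathbb{Z}_N$, one has $(\pi_i(x),\pi_i(x+m))=(\pi_j(y),\pi_j(y+m))$ (indices modulo $N$) if and only if $i=j$ and $x=y$. *)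

theory Defs
  imports Main
begin

text \<open>Z_N is represented by {0..<N} with addition modulo N.
  A rectangle with M rows is a family pi :: nat => nat => nat; row i (for i < M)
  is the map pi i restricted to {0..<N}.\<close>

definition circular_florentine_rectangle :: "nat \<Rightarrow> nat \<Rightarrow> (nat \<Rightarrow> nat \<Rightarrow> nat) \<Rightarrow> bool" where
  "circular_florentine_rectangle M N pi \<longleftrightarrow>
     (\<forall>i<M. bij_betw (pi i) {0..<N} {0..<N}) \<and>
     (\<forall>m\<in>{1..<N}. \<forall>i<M. \<forall>j<M. \<forall>x<N. \<forall>y<N.
        ((pi i x, pi i ((x + m) mod N)) = (pi j y, pi j ((y + m) mod N))
          \<longleftrightarrow> (i = j \<and> x = y)))"

end

theory Submission
  imports Defs
begin

text \<open>Fix rows \<open>i \<noteq> r\<close> and let \<open>\<sigma> = \<pi>\<^sub>r\<^sup>-\<^sup>1 \<circ> \<pi>\<^sub>i\<close>, so that \<open>\<pi>\<^sub>i(t) = \<pi>\<^sub>r(t + l)\<close>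
  means \<open>\<sigma>(t) - t = l\<close>. If two solutions \<open>t\<^sub>1 < t\<^sub>2 = t\<^sub>1 + m\<close> existed, then
  \<open>(\<pi>\<^sub>i(t\<^sub>1), \<pi>\<^sub>i(t\<^sub>1 + m)) = (\<pi>\<^sub>r(t\<^sub>1 + l), \<pi>\<^sub>r(t\<^sub>1 + l + m))\<close>, which the Florentine
  property forbids. Hence the displacement \<open>t \<mapsto> \<sigma>(t) - t\<close> is injective on \<open>\<int>\<^sub>N\<close>, hence
  bijective, and every \<open>l\<close> is attained exactly once.\<close>

lemma mod_add_eq_iff_diff_mod:
  fixes s t l N :: nat
  assumes "s < N" "t < N" "l < N"
  shows "s = (t + l) mod N \<longleftrightarrow> (s + N - t) mod N = l"
proof -
  have "(t + l) mod N = (if t + l < N then t + l else t + l - N)"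
    using assms by (simp add: le_mod_geq)
  moreover have "(s + N - t) mod N = (if t \<le> s then s - t else s + N - t)"
    using assms by (simp add: le_mod_geq)
  ultimately show ?thesis
    using assms by auto
qed

lemma ex1_displacement_solution:
  fixes \<sigma> :: "nat \<Rightarrow> nat"
  assumes maps_to: "\<sigma> ` {0..<N} \<subseteq> {0..<N}"
    and at_most_one: "\<And>l t\<^sub>1 t\<^sub>2. l < N \<Longrightarrow> t\<^sub>1 < N \<Longrightarrow> t\<^sub>2 < N \<Longrightarrow>
      \<sigma> t\<^sub>1 = (t\<^sub>1 + l) mod N \<Longrightarrow> \<sigma> t\<^sub>2 = (t\<^sub>2 + l) mod N \<Longrightarrow> t\<^sub>1 = t\<^sub>2"
    and "l < N"
  shows "\<exists>!t. t < N \<and> \<sigma> t = (t + l) mod N"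
proof -
  define d where "d t = (\<sigma> t + N - t) mod N" for t
  have solution_iff: "\<sigma> t = (t + l') mod N \<longleftrightarrow> d t = l'" if "t < N" "l' < N" for t l'
  proof -
    have "\<sigma> t < N"
      using maps_to \<open>t < N\<close> by (auto simp: image_subset_iff)
    then show ?thesis
      using mod_add_eq_iff_diff_mod[OF _ that] unfolding d_def by blast
  qed
  have d_less: "d t < N" for t
    using \<open>l < N\<close> unfolding d_def by simp
  then have d_maps_to: "d ` {0..<N} \<subseteq> {0..<N}"
    by auto
  have "inj_on d {0..<N}"
  proof (rule inj_onI)
    fix t\<^sub>1 t\<^sub>2
    assume "t\<^sub>1 \<in> {0..<N}" "t\<^sub>2 \<in> {0..<N}" "d t\<^sub>1 = d t\<^sub>2"
    then show "t\<^sub>1 = t\<^sub>2"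
      using at_most_one[of "d t\<^sub>1" t\<^sub>1 t\<^sub>2] solution_iff d_less by auto
  qed
  then have "d ` {0..<N} = {0..<N}"
    using d_maps_to by (simp add: endo_inj_surj)
  then obtain t where "t < N" "d t = l"
    using \<open>l < N\<close> by (metis atLeastLessThan_iff imageE zero_le)
  then show ?thesis
    using at_most_one[OF \<open>l < N\<close>] solution_iff[OF _ \<open>l < N\<close>] by blast
qed

lemma bij_betw_eq_iff_inv_into_eq:
  assumes "bij_betw f A B" "y \<in> B" "x \<in> A"
  shows "y = f x \<longleftrightarrow> inv_into A f y = x"
  using assms by (metis bij_betw_imp_surj_on bij_betw_inv_into_left f_inv_into_f)

lemma circular_florentine_rectangle_bij_row:
  assumes "circular_florentine_rectangle M N pi" "i < M"
  shows "bij_betw (pi i) {0..<N} {0..<N}"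
  using assms unfolding circular_florentine_rectangle_def by blast

lemma circular_florentine_rectangle_distinct_pairs:
  assumes "circular_florentine_rectangle M N pi"
    and "i < M" "j < M" "i \<noteq> j" "m \<in> {1..<N}" "x < N" "y < N"
  shows "(pi i x, pi i ((x + m) mod N)) \<noteq> (pi j y, pi j ((y + m) mod N))"
  using assms unfolding circular_florentine_rectangle_def by blast

lemma circular_florentine_rectangle_shift_solution_unique:
  assumes cfr: "circular_florentine_rectangle M N pi"
    and "i < M" "r < M" "i \<noteq> r" "t\<^sub>1 < N" "t\<^sub>2 < N"
    and "pi i t\<^sub>1 = pi r ((t\<^sub>1 + l) mod N)" "pi i t\<^sub>2 = pi r ((t\<^sub>2 + l) mod N)"
  shows "t\<^sub>1 = t\<^sub>2"
  using assms(5-)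
proof (induction t\<^sub>1 t\<^sub>2 rule: linorder_wlog)
  case (le t\<^sub>1 t\<^sub>2)
  show ?case
  proof (rule ccontr)
    assume "t\<^sub>1 \<noteq> t\<^sub>2"
    define m where "m = t\<^sub>2 - t\<^sub>1"
    have m: "m \<in> {1..<N}" and shift: "(t\<^sub>1 + m) mod N = t\<^sub>2"
      using le \<open>t\<^sub>1 \<noteq> t\<^sub>2\<close> unfolding m_def by auto
    have "((t\<^sub>1 + l) mod N + m) mod N = (t\<^sub>1 + l + m) mod N"
      by (simp add: mod_add_left_eq)
    also have "t\<^sub>1 + l + m = t\<^sub>2 + l"
      using le unfolding m_def by simp
    finally have "((t\<^sub>1 + l) mod N + m) mod N = (t\<^sub>2 + l) mod N" .
    then have "(pi i t\<^sub>1, pi i ((t\<^sub>1 + m) mod N))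
        = (pi r ((t\<^sub>1 + l) mod N), pi r (((t\<^sub>1 + l) mod N + m) mod N))"
      using shift le by simp
    moreover have "(t\<^sub>1 + l) mod N < N"
      using le by simp
    ultimately show False
      using circular_florentine_rectangle_distinct_pairs[OF cfr \<open>i < M\<close> \<open>r < M\<close> \<open>i \<noteq> r\<close> m]
        le by blast
  qed
next
  case (sym t\<^sub>1 t\<^sub>2)
  then show ?case by simp
qed

theorem lemma3:
  fixes M N :: nat and pi :: "nat \<Rightarrow> nat \<Rightarrow> nat"
  assumes "N \<ge> 2"
    and "circular_florentine_rectangle M N pi"
    and "i < M" and "r < M" and "i \<noteq> r"
    and "l < N"
  shows "\<exists>!t. t < N \<and> pi i t = pi r ((t + l) mod N)"
proof -
  have bij_i: "bij_betw (pi i) {0..<N} {0..<N}" and bij_r: "bij_betw (pi r) {0..<N} {0..<N}"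
    using assms(2-4) by (simp_all add: circular_florentine_rectangle_bij_row)
  define \<sigma> where "\<sigma> = inv_into {0..<N} (pi r) \<circ> pi i"
  have \<sigma>_maps_to: "\<sigma> ` {0..<N} \<subseteq> {0..<N}"
    using bij_betw_trans[OF bij_i bij_betw_inv_into[OF bij_r]] unfolding \<sigma>_def bij_betw_def by blast
  have "N > 0"
    using \<open>l < N\<close> by simp
  have solution_iff: "pi i t = pi r ((t + l') mod N) \<longleftrightarrow> \<sigma> t = (t + l') mod N"
    if "t < N" for t l'
    using bij_betw_eq_iff_inv_into_eq[OF bij_r, of "pi i t" "(t + l') mod N"]
      bij_betwE[OF bij_i] \<open>t < N\<close> \<open>N > 0\<close>
    unfolding \<sigma>_def by auto
  have "\<exists>!t. t < N \<and> \<sigma> t = (t + l) mod N"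
  proof (rule ex1_displacement_solution[OF \<sigma>_maps_to _ \<open>l < N\<close>])
    fix l' t\<^sub>1 t\<^sub>2
    assume "t\<^sub>1 < N" "t\<^sub>2 < N" "\<sigma> t\<^sub>1 = (t\<^sub>1 + l') mod N" "\<sigma> t\<^sub>2 = (t\<^sub>2 + l') mod N"
    then show "t\<^sub>1 = t\<^sub>2"
      using circular_florentine_rectangle_shift_solution_unique[OF assms(2-5)] solution_iff
      by blast
  qed
  then show ?thesis
    by (simp add: solution_iff cong: conj_cong)
qed

end
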